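(* Let $A$ and $B$ be alternating sign hypermatrices of order $n$. Then $A\preceq_B B$ if and only if $\Xi(A)_{i,j,k}\ge \Xi(B)_{i,j,k}$ for all $i,j,k\in\{0,1,\dots,n\}$.
   Context: Let $[n]=\{1,\dots,n\}$. A hypermatrix of order $n$ is an integer array $A=(A_{i,j,k})_{i,j,k\in[n]}$; its lines are the $n$-tuples obtained by fixing two of the three indices. An alternating sign hypermatrix of order $n$ is a hypermatrix with entries in $\{0,1,-1\}$ such that in every line the nonzero entries alternate in sign, beginning and ending with $+1$. $\Xi(A)$ is the array indexed by $\{0,\dots,n\}^3$ with $\Xi(A)_{i,j,k}=\sum_{a=1}^i\sum_{b=1}^j\sum_{c=1}^k A_{a,b,c}$. For $i_1<i_2$, $j_1<j_2$, $k_1<k_2$ in $[n]$, the positive T-block on $\{i_1,i_2\}\times\{j_1,j_2\}\times\{k_1,k_2\}$ is the hypermatrix that is zero outside these eight positions, with entries $+1$ at $(i_1,j_1,k_1),(i_2,j_2,k_1),(i_1,j_2,k_2),(i_2,j_1,k_2)$ and $-1$ at $(i_1,j_2,k_1),(i_2,j_1,k_1),(i_1,j_1,k_2),(i_2,j_2,k_2)$. For hypermatrices $A,B$ of order $n$, the Bruhat order is $A\preceq_B B$ iff $A-B$ is a (possibly empty) sum of positive T-blocks. *)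

theory Defs
  imports Main
begin

text \<open>A hypermatrix of order n is represented as a function nat => nat => nat => int;
  only the entries with indices in {1..n} are relevant; we require it to vanish elsewhere.\<close>
type_synonym hmat = "nat \<Rightarrow> nat \<Rightarrow> nat \<Rightarrow> int"

definition supported :: "nat \<Rightarrow> hmat \<Rightarrow> bool" where
  "supported n A \<longleftrightarrow> (\<forall>i j k. \<not> (i \<in> {1..n} \<and> j \<in> {1..n} \<and> k \<in> {1..n}) \<longrightarrow> A i j k = 0)"

definition alt_pm :: "int list \<Rightarrow> bool" where
  "alt_pm xs \<longleftrightarrow> odd (length xs) \<and> (\<forall>k < length xs. xs ! k = (if even k then 1 else -1))"

definition ash_line :: "int list \<Rightarrow> bool" where
  "ash_line xs \<longleftrightarrow> set xs \<subseteq> {0, 1, -1} \<and> alt_pm (filter (\<lambda>x. x \<noteq> 0) xs)"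

definition ASHM :: "nat \<Rightarrow> hmat \<Rightarrow> bool" where
  "ASHM n A \<longleftrightarrow> supported n A \<and>
     (\<forall>a\<in>{1..n}. \<forall>b\<in>{1..n}.
        ash_line (map (\<lambda>t. A t a b) [1..<n+1]) \<and>
        ash_line (map (\<lambda>t. A a t b) [1..<n+1]) \<and>
        ash_line (map (\<lambda>t. A a b t) [1..<n+1]))"

definition Xi :: "hmat \<Rightarrow> nat \<Rightarrow> nat \<Rightarrow> nat \<Rightarrow> int" where
  "Xi A i j k = (\<Sum>a=1..i. \<Sum>b=1..j. \<Sum>c=1..k. A a b c)"

definition pos_T_block :: "nat \<Rightarrow> nat \<Rightarrow> nat \<Rightarrow> nat \<Rightarrow> nat \<Rightarrow> nat \<Rightarrow> hmat" where
  "pos_T_block i1 i2 j1 j2 k1 k2 = (\<lambda>i j k.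
     if (i, j, k) \<in> {(i1,j1,k1), (i2,j2,k1), (i1,j2,k2), (i2,j1,k2)} then 1
     else if (i, j, k) \<in> {(i1,j2,k1), (i2,j1,k1), (i1,j1,k2), (i2,j2,k2)} then -1
     else 0)"

definition valid_T :: "nat \<Rightarrow> nat \<times> nat \<times> nat \<times> nat \<times> nat \<times> nat \<Rightarrow> bool" where
  "valid_T n t = (case t of (i1, i2, j1, j2, k1, k2) \<Rightarrow>
     1 \<le> i1 \<and> i1 < i2 \<and> i2 \<le> n \<and> 1 \<le> j1 \<and> j1 < j2 \<and> j2 \<le> n \<and>
     1 \<le> k1 \<and> k1 < k2 \<and> k2 \<le> n)"

definition T_of :: "nat \<times> nat \<times> nat \<times> nat \<times> nat \<times> nat \<Rightarrow> hmat" where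
  "T_of t = (case t of (i1, i2, j1, j2, k1, k2) \<Rightarrow> pos_T_block i1 i2 j1 j2 k1 k2)"

definition bruhat_le :: "nat \<Rightarrow> hmat \<Rightarrow> hmat \<Rightarrow> bool" where
  "bruhat_le n A B \<longleftrightarrow> (\<exists>ts. (\<forall>t\<in>set ts. valid_T n t) \<and>
     (\<forall>i j k. A i j k - B i j k = (\<Sum>t\<leftarrow>ts. T_of t i j k)))"

end

theory Submission
  imports Defs
begin

text \<open>A positive T-block is the tensor product (e_i1 - e_i2) \<otimes> (e_j1 - e_j2) \<otimes> (e_k1 - e_k2),
  so its corner-sum array \<Xi> is a product of three prefix sums of e_x - e_y with x < y, each
  nonnegative; as \<Xi> is additive, A \<preceq>_B B forces \<Xi>(A) \<ge> \<Xi>(B).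
  Conversely, every line of an alternating sign hypermatrix sums to 1, so D = A - B has vanishing
  line sums. Inverting the prefix-sum operator in one coordinate at a time then expresses D as
  the sum of \<Xi>(D)_ijk T(i, i+1, j, j+1, k, k+1) over 1 \<le> i, j, k < n, a combination of
  positive T-blocks with coefficients \<Xi>(A)_ijk - \<Xi>(B)_ijk \<ge> 0.\<close>

lemma alt_pm_sum_list:
  assumes "alt_pm xs"
  shows "sum_list xs = 1"
proof -
  have "sum_list (map (\<lambda>k. if even k then 1 else -1) [0..<m]) = (if odd m then 1 else (0::int))" for m
    by (induction m) auto
  moreover have "xs = map (\<lambda>k. if even k then 1 else -1) [0..<length xs]"
    using assms by (intro nth_equalityI) (auto simp: alt_pm_def)
  ultimately show ?thesis
    using assms unfolding alt_pm_def by metis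
qed

lemma ash_line_sum_list: "ash_line xs \<Longrightarrow> sum_list xs = 1"
  using alt_pm_sum_list[of "filter (\<lambda>x. x \<noteq> 0) xs"] sum_list_map_filter[of xs "\<lambda>x. x \<noteq> 0" id]
  by (simp add: ash_line_def)

lemma ASHM_line_sums:
  assumes "ASHM n A"
  shows "(\<Sum>t=1..n. A t b c) = of_bool (b \<in> {1..n} \<and> c \<in> {1..n})"
    and "(\<Sum>t=1..n. A b t c) = of_bool (b \<in> {1..n} \<and> c \<in> {1..n})"
    and "(\<Sum>t=1..n. A b c t) = of_bool (b \<in> {1..n} \<and> c \<in> {1..n})"
proof -
  have line: "(\<Sum>t=1..n. f t) = 1" if "ash_line (map f [1..<n+1])" for f :: "nat \<Rightarrow> int"
    using ash_line_sum_list[OF that]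
    by (simp only: sum_set_upt_conv_sum_list_nat[symmetric] set_upt Suc_eq_plus1[symmetric]
        atLeastLessThanSuc_atLeastAtMost)
  show "(\<Sum>t=1..n. A t b c) = of_bool (b \<in> {1..n} \<and> c \<in> {1..n})"
    using assms line[of "\<lambda>t. A t b c"] by (auto simp: ASHM_def supported_def)
  show "(\<Sum>t=1..n. A b t c) = of_bool (b \<in> {1..n} \<and> c \<in> {1..n})"
    using assms line[of "\<lambda>t. A b t c"] by (auto simp: ASHM_def supported_def)
  show "(\<Sum>t=1..n. A b c t) = of_bool (b \<in> {1..n} \<and> c \<in> {1..n})"
    using assms line[of "\<lambda>t. A b c t"] by (auto simp: ASHM_def supported_def)
qed

definition unit_diff :: "nat \<Rightarrow> nat \<Rightarrow> nat \<Rightarrow> 'a::ring_1" where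
  "unit_diff x y a = (if a = x then 1 else 0) - (if a = y then 1 else 0)"

lemma pos_T_block_eq_tensor:
  assumes "i1 \<noteq> i2" "j1 \<noteq> j2" "k1 \<noteq> k2"
  shows "pos_T_block i1 i2 j1 j2 k1 k2 a b c = unit_diff i1 i2 a * unit_diff j1 j2 b * unit_diff k1 k2 c"
  using assms by (auto simp: pos_T_block_def unit_diff_def)

lemma sum_unit_diff_nonneg:
  assumes "1 \<le> x" "x < y"
  shows "(\<Sum>a=1..i. unit_diff x y a) \<ge> (0::'a::linordered_idom)"
  using assms by (simp add: unit_diff_def sum_subtractf sum.delta')

lemma Xi_diff: "Xi (\<lambda>a b c. A a b c - B a b c) i j k = Xi A i j k - Xi B i j k"
  by (simp add: Xi_def sum_subtractf)

lemma Xi_sum_list: "Xi (\<lambda>a b c. \<Sum>t\<leftarrow>ts. f t a b c) i j k = (\<Sum>t\<leftarrow>ts. Xi (f t) i j k)"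
  by (induction ts) (simp_all add: Xi_def sum.distrib)

lemma Xi_tensor:
  "Xi (\<lambda>a b c. f a * g b * h c) i j k = (\<Sum>a=1..i. f a) * (\<Sum>b=1..j. g b) * (\<Sum>c=1..k. h c)"
  by (simp add: Xi_def sum_distrib_left[symmetric] sum_distrib_right[symmetric])

lemma Xi_T_of_nonneg:
  assumes "valid_T n t"
  shows "Xi (T_of t) i j k \<ge> 0"
proof -
  obtain i1 i2 j1 j2 k1 k2 where t: "t = (i1, i2, j1, j2, k1, k2)"
    by (cases t) auto
  with assms have "T_of t = (\<lambda>a b c. unit_diff i1 i2 a * unit_diff j1 j2 b * unit_diff k1 k2 c)"
    by (auto intro!: ext simp: T_of_def valid_T_def pos_T_block_eq_tensor)
  then have "Xi (T_of t) i j k =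
      (\<Sum>a=1..i. unit_diff i1 i2 a) * (\<Sum>b=1..j. unit_diff j1 j2 b) * (\<Sum>c=1..k. unit_diff k1 k2 c)"
    by (simp only: Xi_tensor)
  also have "\<dots> \<ge> 0"
    using assms unfolding t valid_T_def by (intro mult_nonneg_nonneg sum_unit_diff_nonneg) auto
  finally show ?thesis .
qed

lemma bruhat_le_imp_Xi_ge:
  assumes "bruhat_le n A B"
  shows "Xi B i j k \<le> Xi A i j k"
proof -
  obtain ts where valid: "\<forall>t\<in>set ts. valid_T n t"
    and diff: "(\<lambda>a b c. A a b c - B a b c) = (\<lambda>a b c. \<Sum>t\<leftarrow>ts. T_of t a b c)"
    using assms unfolding bruhat_le_def by blast
  have "Xi A i j k - Xi B i j k = (\<Sum>t\<leftarrow>ts. Xi (T_of t) i j k)"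
    by (simp only: Xi_diff[symmetric] diff Xi_sum_list)
  also have "\<dots> \<ge> 0"
    using valid by (intro sum_list_nonneg) (auto intro: Xi_T_of_nonneg)
  finally show ?thesis by simp
qed

lemma sum_prefix_sums_unit_diff:
  fixes p :: "nat \<Rightarrow> 'a::comm_ring_1"
  assumes support: "\<And>a. a \<notin> {1..n} \<Longrightarrow> p a = 0" and total: "(\<Sum>a=1..n. p a) = 0"
  shows "(\<Sum>i=1..<n. (\<Sum>a'=1..i. p a') * unit_diff i (Suc i) a) = p a"
proof -
  define P where "P i = (\<Sum>a'=1..i. p a')" for i
  \<comment> \<open>Summation by parts: the sum telescopes to P a - P (a - 1) = p a, using P 0 = P n = 0.\<close>
  have "(\<Sum>i=1..<n. P i * unit_diff i (Suc i) a)
      = (\<Sum>i=1..<n. if a = i then P i else 0) - (\<Sum>i=1..<n. if a = Suc i then P i else 0)"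
    unfolding sum_subtractf[symmetric] by (rule sum.cong) (auto simp: unit_diff_def)
  also have "\<dots> = p a"
  proof (cases a)
    case 0
    with support show ?thesis by simp
  next
    case (Suc a0)
    have "P 0 = 0" "P (Suc a0) = P a0 + p (Suc a0)" "P n = 0"
      using total by (simp_all add: P_def)
    with Suc support[of a] show ?thesis
      by (cases "a0 = 0"; cases "a < n"; cases "a = n") (auto simp: add_eq_0_iff)
  qed
  finally show ?thesis by (simp add: P_def)
qed

lemma Xi_conv_reversed_sum: "Xi D i j k = (\<Sum>c=1..k. \<Sum>b=1..j. \<Sum>a=1..i. D a b c)"
proof -
  have "Xi D i j k = (\<Sum>a=1..i. \<Sum>c=1..k. \<Sum>b=1..j. D a b c)"
    unfolding Xi_def by (intro sum.cong refl sum.swap)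
  also have "\<dots> = (\<Sum>c=1..k. \<Sum>a=1..i. \<Sum>b=1..j. D a b c)"
    by (rule sum.swap)
  also have "\<dots> = (\<Sum>c=1..k. \<Sum>b=1..j. \<Sum>a=1..i. D a b c)"
    by (intro sum.cong refl sum.swap)
  finally show ?thesis .
qed

lemma adjacent_T_block_expansion:
  fixes D :: hmat
  assumes support: "supported n D"
    and sums1: "\<And>b c. (\<Sum>t=1..n. D t b c) = 0"
    and sums2: "\<And>a c. (\<Sum>t=1..n. D a t c) = 0"
    and sums3: "\<And>a b. (\<Sum>t=1..n. D a b t) = 0"
  shows "D a b c = (\<Sum>i=1..<n. \<Sum>j=1..<n. \<Sum>k=1..<n.
           Xi D i j k * T_of (i, Suc i, j, Suc j, k, Suc k) a b c)"
proof -
  have outside_zero: "D a' b' c' = 0" if "a' \<notin> {1..n} \<or> b' \<notin> {1..n} \<or> c' \<notin> {1..n}" for a' b' c'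
    using support that by (auto simp: supported_def)
  have expand_a: "D a b c = (\<Sum>i=1..<n. (\<Sum>a'=1..i. D a' b c) * unit_diff i (Suc i) a)"
    by (rule sum_prefix_sums_unit_diff[symmetric]) (use sums1 in \<open>simp_all add: outside_zero\<close>)
  have expand_b: "(\<Sum>a'=1..i. D a' b c) =
      (\<Sum>j=1..<n. (\<Sum>b'=1..j. \<Sum>a'=1..i. D a' b' c) * unit_diff j (Suc j) b)" for i
  proof (rule sum_prefix_sums_unit_diff[symmetric])
    show "(\<Sum>b'=1..n. \<Sum>a'=1..i. D a' b' c) = 0"
      using sums2 by (subst sum.swap) simp
  qed (simp add: outside_zero)
  have expand_c: "(\<Sum>b'=1..j. \<Sum>a'=1..i. D a' b' c) =
      (\<Sum>k=1..<n. Xi D i j k * unit_diff k (Suc k) c)" for i j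
    unfolding Xi_conv_reversed_sum
  proof (rule sum_prefix_sums_unit_diff[symmetric])
    have "(\<Sum>c'=1..n. \<Sum>b'=1..j. \<Sum>a'=1..i. D a' b' c') = Xi D i j n"
      by (rule Xi_conv_reversed_sum[symmetric])
    also have "\<dots> = 0"
      using sums3 by (simp add: Xi_def)
    finally show "(\<Sum>c'=1..n. \<Sum>b'=1..j. \<Sum>a'=1..i. D a' b' c') = 0" .
  qed (simp add: outside_zero)
  have T: "T_of (i, Suc i, j, Suc j, k, Suc k) a b c =
      unit_diff i (Suc i) a * unit_diff j (Suc j) b * unit_diff k (Suc k) c" for i j k
    by (simp add: T_of_def pos_T_block_eq_tensor)
  show ?thesis
    unfolding expand_a expand_b expand_c T
    by (simp add: sum_distrib_left sum_distrib_right mult_ac)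
qed

lemma bruhat_le_of_nonneg_combination:
  assumes "finite I" and nonneg: "\<forall>x\<in>I. valid_T n (\<tau> x) \<and> 0 \<le> w x"
    and diff: "\<And>a b c. A a b c - B a b c = (\<Sum>x\<in>I. w x * T_of (\<tau> x) a b c)"
  shows "bruhat_le n A B"
proof -
  have "\<exists>ts. (\<forall>t\<in>set ts. valid_T n t) \<and>
      (\<forall>a b c. (\<Sum>t\<leftarrow>ts. T_of t a b c) = (\<Sum>x\<in>I. w x * T_of (\<tau> x) a b c))"
    using \<open>finite I\<close> nonneg
  proof (induction I rule: finite_induct)
    case empty
    show ?case by (intro exI[of _ "[]"]) simp
  next
    case (insert x I)
    then obtain ts where "\<forall>t\<in>set ts. valid_T n t"
      and "\<forall>a b c. (\<Sum>t\<leftarrow>ts. T_of t a b c) = (\<Sum>x\<in>I. w x * T_of (\<tau> x) a b c)"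
      by auto
    with insert show ?case
      by (intro exI[of _ "ts @ replicate (nat (w x)) (\<tau> x)"]) (auto simp: sum_list_replicate)
  qed
  with diff show ?thesis
    unfolding bruhat_le_def by auto
qed

lemma Xi_ge_imp_bruhat_le:
  assumes "ASHM n A" "ASHM n B"
    and Xi_ge: "\<forall>i\<in>{1..<n}. \<forall>j\<in>{1..<n}. \<forall>k\<in>{1..<n}. Xi B i j k \<le> Xi A i j k"
  shows "bruhat_le n A B"
proof -
  define D where "D = (\<lambda>a b c. A a b c - B a b c)"
  define I where "I = {1..<n} \<times> {1..<n} \<times> {1..<n}"
  define \<tau> where "\<tau> = (\<lambda>(i, j, k). (i, Suc i, j, Suc j, k, Suc k))"
  define w where "w = (\<lambda>(i, j, k). Xi D i j k)"
  have "supported n D"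
    using assms(1,2) by (simp add: ASHM_def supported_def D_def)
  moreover have "(\<Sum>t=1..n. D t b c) = 0" "(\<Sum>t=1..n. D a t c) = 0" "(\<Sum>t=1..n. D a b t) = 0"
    for a b c
    using ASHM_line_sums[OF assms(1)] ASHM_line_sums[OF assms(2)]
    by (simp_all add: D_def sum_subtractf)
  ultimately have "D a b c = (\<Sum>i=1..<n. \<Sum>j=1..<n. \<Sum>k=1..<n.
      Xi D i j k * T_of (i, Suc i, j, Suc j, k, Suc k) a b c)" for a b c
    by (rule adjacent_T_block_expansion)
  then have "D a b c = (\<Sum>x\<in>I. w x * T_of (\<tau> x) a b c)" for a b c
    by (simp add: I_def w_def \<tau>_def sum.cartesian_product split_def)
  moreover have "\<forall>x\<in>I. valid_T n (\<tau> x) \<and> 0 \<le> w x"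
    using Xi_ge by (auto simp: I_def \<tau>_def w_def valid_T_def D_def Xi_diff)
  ultimately show ?thesis
    unfolding D_def by (intro bruhat_le_of_nonneg_combination) (simp_all add: I_def)
qed

theorem mainTheorem5:
  fixes n :: nat and A B :: hmat
  assumes "ASHM n A" and "ASHM n B"
  shows "bruhat_le n A B \<longleftrightarrow> (\<forall>i\<le>n. \<forall>j\<le>n. \<forall>k\<le>n. Xi A i j k \<ge> Xi B i j k)"
  using bruhat_le_imp_Xi_ge Xi_ge_imp_bruhat_le[OF assms] by auto

end
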